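(* Let $D$ be a bounded domain in $\mathbb{R}^m$, $m \geq 2$, and let $u \in C^0(D)$. For $x \in D$ and $0 < r_1 < r_2$ put $A_x(r_1,r_2) = \{ y \in \mathbb{R}^m : r_1 < |x-y| < r_2 \}$, and call $B_{r_2}(x) = \{y : |y-x|<r_2\}$ admissible if $\overline{B_{r_2}(x)} \subset D$. Suppose that $$\frac{1}{|A_x(r_1,r_2)|}\int_{A_x(r_1,r_2)} u(y)\,\mathrm{d}y \;=\; \frac{1}{\omega_m r^{m-1}} \int_{S_r(x)} u(y)\,\mathrm{d}S_y$$ holds for every $x \in D$ and every $r_2 > r_1 > 0$ such that $B_{r_2}(x)$ is admissible, where $S_r(x)=\{y : |y-x| = r\}$ and $r$ is subject to one of the following: either the identity holds for every $r \in (r_1,r_2)$, or it holds with $r = r_1$, or it holds with $r = r_2$. Then $u$ is harmonic in $D$.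
   Context: $|A|$ denotes Lebesgue measure (volume) of $A$, $\mathrm{d}S$ is the surface area measure, and $\omega_m = 2\pi^{m/2}/\Gamma(m/2)$ is the area of the unit sphere in $\mathbb{R}^m$, so the right-hand side is the mean value of $u$ over the sphere $S_r(x)$. *)

theory Defs
  imports "HOL-Analysis.Analysis"
begin

definition omega :: "nat \<Rightarrow> real" where
  "omega m = 2 * pi powr (real m / 2) / Gamma (real m / 2)"

definition annulus :: "'a::euclidean_space \<Rightarrow> real \<Rightarrow> real \<Rightarrow> 'a set" where
  "annulus x r1 r2 = {y. r1 < dist x y \<and> dist x y < r2}"

text \<open>HOL-Analysis has no surface measure, so we use the cone
  construction, which for spheres gives exactly the surface measure:
  sigma(E) = (m/r) |{x + t (y - x) : y in E, 0 < t <= 1}|, i.e.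
  integral over S_r(x) of f dS = (m/r) * integral over B_r(x) of f(x + r (y-x)/|y-x|) dy.\<close>
definition sphere_integral :: "('a::euclidean_space \<Rightarrow> real) \<Rightarrow> 'a \<Rightarrow> real \<Rightarrow> real" where
  "sphere_integral f x r =
     (real DIM('a) / r) * integral (ball x r) (\<lambda>y. f (x + (r / norm (y - x)) *\<^sub>R (y - x)))"

definition harmonic_on :: "'a::euclidean_space set \<Rightarrow> ('a \<Rightarrow> real) \<Rightarrow> bool" where
  "harmonic_on D u \<longleftrightarrow>
     (\<exists>u' u''. (\<forall>x\<in>D. (u has_derivative u' x) (at x)) \<and>
               (\<forall>x\<in>D. \<forall>v. ((\<lambda>y. u' y v) has_derivative u'' x v) (at x)) \<and>
               (\<forall>v w. continuous_on D (\<lambda>x. u'' x v w)) \<and>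
               (\<forall>x\<in>D. (\<Sum>b\<in>Basis. u'' x b b) = 0))"

end

theory Submission
  imports Defs
begin

text \<open>
  The hypothesis says that the mean of u over each admissible annulus around x is a fixed function
  of a single radius (an interior radius, the inner one or the outer one); the actual values of the
  sphere averages play no role. Comparing annuli that share a radius shows that all these means are
  one constant c, that is int_{B_b} u - int_{B_a} u = c (|B_b| - |B_a|). Letting a tend to 0 gives
  int_{B_r} u = c |B_r|, and continuity at x forces c = u x: u has the mean value property on balls.

  The mean value property extends from balls to continuous radial weights psi(|y - x|): on a thin
  shell psi is almost constant, and u - u x integrates to 0 over every shell. Integrating u against
  the kernel (rho^2 - |y - x|^2)_+^3, which is C^2 in x, therefore reproduces u up to a positive
  constant, so u is C^2. Its Laplacian is the integral of u against another radial weight, hence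
  u x times the Laplacian of the smoothing of the constant 1; the latter smoothing is locally
  constant, so the Laplacian of u vanishes.
\<close>

lemma integrable_on_subset_compact:
  fixes f :: "'a::euclidean_space \<Rightarrow> real"
  assumes "compact S" "continuous_on S f" "T \<in> sets lebesgue" "T \<subseteq> S"
  shows "f integrable_on T"
proof -
  have "f absolutely_integrable_on S"
    using borel_integrable_compact[OF assms(1,2)]
      borel_integrable_compact[OF assms(1) continuous_on_norm[OF assms(2)]]
    unfolding absolutely_integrable_on_def set_integrable_def[symmetric]
    by (auto intro: set_borel_integral_eq_integral(1))
  then have "f absolutely_integrable_on T"
    by (rule set_integrable_subset) (use assms in auto)
  then show ?thesis
    by (rule set_lebesgue_integral_eq_integral(1))
qed

lemma integral_const_lmeasurable:
  assumes "S \<in> lmeasurable"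
  shows "integral S (\<lambda>x. c) = c * measure lebesgue S"
  using lmeasure_integral[OF assms] integral_mult_right[of S c "\<lambda>x. 1"] by simp

lemma abs_integral_le_measure:
  fixes f :: "'a::euclidean_space \<Rightarrow> real"
  assumes "S \<in> lmeasurable" "f integrable_on S" "\<And>x. x \<in> S \<Longrightarrow> \<bar>f x\<bar> \<le> B"
  shows "\<bar>integral S f\<bar> \<le> B * measure lebesgue S"
proof -
  have "norm (integral S f) \<le> integral S (\<lambda>x. B)"
    by (rule integral_norm_bound_integral) (use assms integrable_on_const in auto)
  then show ?thesis
    using integral_const_lmeasurable[OF assms(1)] by simp
qed

lemma integral_eq_if_zero_outside:
  fixes f :: "'a::euclidean_space \<Rightarrow> real"
  assumes "S \<subseteq> T" "\<And>y. y \<in> T \<Longrightarrow> y \<notin> S \<Longrightarrow> f y = 0"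
  shows "integral T f = integral S f"
proof -
  have "integral T f = integral T (\<lambda>y. if y \<in> S then f y else 0)"
    using assms by (intro integral_cong) auto
  then show ?thesis
    using assms(1) by (simp add: integral_restrict_Int Int_absorb2)
qed

lemma measure_ball_strict_mono:
  fixes x :: "'a::euclidean_space"
  assumes "0 \<le> a" "a < b"
  shows "measure lebesgue (ball x a) < measure lebesgue (ball x b)"
proof -
  have "a ^ DIM('a) < b ^ DIM('a)"
    using assms by (intro power_strict_mono) auto
  then show ?thesis
    using assms content_ball_conv_unit_ball[of _ x] content_ball_pos[of 1 "0::'a"] by simp
qed

lemma integral_ball_tendsto_0:
  fixes u :: "'a::euclidean_space \<Rightarrow> real"
  assumes "continuous_on (cball x R) u" "0 < R"
  shows "((\<lambda>r. integral (ball x r) u) \<longlongrightarrow> 0) (at_right 0)"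
proof -
  obtain M where M: "\<forall>y\<in>cball x R. \<bar>u y\<bar> \<le> M"
    using compact_imp_bounded[OF compact_continuous_image[OF assms(1) compact_cball]]
    by (auto simp: bounded_real)
  have "((\<lambda>r. M * (r ^ DIM('a) * measure lebesgue (ball (0::'a) 1))) \<longlongrightarrow> 0) (at_right 0)"
    by (auto intro!: tendsto_eq_intros simp: DIM_positive)
  then show ?thesis
  proof (rule Lim_null_comparison[rotated])
    have "eventually (\<lambda>r. 0 < r \<and> r < R) (at_right (0::real))"
      by (rule eventually_at_rightI[of 0 R]) (use assms(2) in auto)
    then show "\<forall>\<^sub>F r in at_right 0.
      norm (integral (ball x r) u) \<le> M * (r ^ DIM('a) * measure lebesgue (ball (0::'a) 1))"
    proof eventually_elim
      case (elim r)
      have "\<bar>integral (ball x r) u\<bar> \<le> M * measure lebesgue (ball x r)"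
        using elim M
        by (intro abs_integral_le_measure integrable_on_subset_compact[OF compact_cball assms(1)]) auto
      then show ?case
        using content_ball_conv_unit_ball[of r x] elim by simp
    qed
  qed
qed

lemma
  fixes u :: "'a::euclidean_space \<Rightarrow> real"
  assumes cont: "continuous_on (cball x R) u" and "0 < a" "a < b" "b \<le> R"
  shows integral_annulus:
      "integral (annulus x a b) u = integral (ball x b) u - integral (ball x a) u"
    and measure_annulus:
      "measure lebesgue (annulus x a b) = measure lebesgue (ball x b) - measure lebesgue (ball x a)"
proof -
  have annulus: "annulus x a b = ball x b - cball x a"
    by (auto simp: annulus_def)
  have "cball x a - ball x b = {}"
    using assms by auto
  then have "integral (ball x b - cball x a) u = integral (ball x b) u - integral (cball x a) u"
    using assms by (intro integral_setdiff integrable_on_subset_compact[OF compact_cball cont]) auto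
  moreover have "integral (ball x a) u = integral (cball x a) u"
    by (rule integral_subset_negligible) (auto simp: cball_diff_eq_sphere negligible_sphere)
  ultimately show "integral (annulus x a b) u = integral (ball x b) u - integral (ball x a) u"
    by (simp add: annulus)
  have "measure lebesgue (ball x b - cball x a)
      = measure lebesgue (ball x b) - measure lebesgue (cball x a)"
    using assms emeasure_lborel_ball_finite[of x b] by (intro measure_Diff) auto
  then show
    "measure lebesgue (annulus x a b) = measure lebesgue (ball x b) - measure lebesgue (ball x a)"
    by (simp add: annulus content_cball_conv_ball)
qed

section \<open>From annulus means to the mean value property\<close>

definition annulus_mean :: "('a::euclidean_space \<Rightarrow> real) \<Rightarrow> 'a \<Rightarrow> real \<Rightarrow> real \<Rightarrow> real" where
  "annulus_mean u x a b = integral (annulus x a b) u / measure lebesgue (annulus x a b)"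

lemma proportional_increments_if_interior_point:
  fixes I V g :: "real \<Rightarrow> real"
  assumes V: "strict_mono_on {0<..} V"
    and incr: "\<And>a \<rho> b. 0 < a \<Longrightarrow> a < \<rho> \<Longrightarrow> \<rho> < b \<Longrightarrow> b \<le> R \<Longrightarrow> I b - I a = g \<rho> * (V b - V a)"
  shows "\<exists>c. \<forall>a b. 0 < a \<longrightarrow> a < b \<longrightarrow> b \<le> R \<longrightarrow> I b - I a = c * (V b - V a)"
proof -
  have g: "g \<rho> = g (R/2)" if "0 < \<rho>" "\<rho> < R" for \<rho>
  proof -
    define a where "a = min \<rho> (R/2) / 2"
    have a: "0 < a" "a < \<rho>" "a < R/2"
      using that by (auto simp: a_def)
    have "g \<rho> * (V R - V a) = g (R/2) * (V R - V a)"
      using incr[of a \<rho> R] incr[of a "R/2" R] a that by auto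
    then show ?thesis
      using strict_mono_onD[OF V, of a R] a that by simp
  qed
  show ?thesis
  proof (intro exI allI impI)
    fix a b :: real
    assume "0 < a" "a < b" "b \<le> R"
    then show "I b - I a = g (R/2) * (V b - V a)"
      using incr[of a "(a + b) / 2" b] g[of "(a + b) / 2"] by auto
  qed
qed

lemma proportional_increments_if_left_endpoint:
  fixes I V g :: "real \<Rightarrow> real"
  assumes V: "strict_mono_on {0<..} V"
    and incr: "\<And>a b. 0 < a \<Longrightarrow> a < b \<Longrightarrow> b \<le> R \<Longrightarrow> I b - I a = g a * (V b - V a)"
  shows "\<exists>c. \<forall>a b. 0 < a \<longrightarrow> a < b \<longrightarrow> b \<le> R \<longrightarrow> I b - I a = c * (V b - V a)"
proof -
  have g: "g a = g a'" if "0 < a" "a < a'" "a' < R" for a a'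
  proof -
    have "g a * (V R - V a') = (I R - I a) - (I a' - I a)"
      using incr[of a R] incr[of a a'] that by (simp add: algebra_simps)
    also have "\<dots> = g a' * (V R - V a')"
      using incr[of a' R] that by simp
    finally show ?thesis
      using strict_mono_onD[OF V, of a' R] that by simp
  qed
  have gR: "g a = g (R/2)" if "0 < a" "a < R" for a
  proof (cases a "R/2" rule: linorder_cases)
    case less
    then show ?thesis using g[of a "R/2"] that by simp
  next
    case greater
    then show ?thesis using g[of "R/2" a] that by simp
  qed (simp only:)
  show ?thesis
  proof (intro exI allI impI)
    fix a b :: real
    assume ab: "0 < a" "a < b" "b \<le> R"
    then show "I b - I a = g (R/2) * (V b - V a)"
      using incr[OF ab] gR[of a] by simp
  qed
qed

lemma proportional_increments_if_right_endpoint: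
  fixes I V g :: "real \<Rightarrow> real"
  assumes V: "strict_mono_on {0<..} V"
    and incr: "\<And>a b. 0 < a \<Longrightarrow> a < b \<Longrightarrow> b \<le> R \<Longrightarrow> I b - I a = g b * (V b - V a)"
  shows "\<exists>c. \<forall>a b. 0 < a \<longrightarrow> a < b \<longrightarrow> b \<le> R \<longrightarrow> I b - I a = c * (V b - V a)"
proof -
  have g: "g b = g b'" if "0 < b" "b < b'" "b' \<le> R" for b b'
  proof -
    have "g b' * (V b - V (b/2)) = (I b' - I (b/2)) - (I b' - I b)"
      using incr[of "b/2" b'] incr[of b b'] that by (simp add: algebra_simps)
    also have "\<dots> = g b * (V b - V (b/2))"
      using incr[of "b/2" b] that by simp
    finally show ?thesis
      using strict_mono_onD[OF V, of "b/2" b] that by simp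
  qed
  have gR: "g b = g R" if "0 < b" "b \<le> R" for b
    using g[of b R] that by (cases "b = R") auto
  show ?thesis
  proof (intro exI allI impI)
    fix a b :: real
    assume ab: "0 < a" "a < b" "b \<le> R"
    then show "I b - I a = g R * (V b - V a)"
      using incr[OF ab] gR[of b] by simp
  qed
qed

lemma annulus_integrals_proportional:
  fixes u :: "'a::euclidean_space \<Rightarrow> real" and g :: "real \<Rightarrow> real"
  assumes cont: "continuous_on (cball x R) u"
    and means:
      "(\<forall>a b. 0 < a \<and> a < b \<and> b \<le> R \<longrightarrow> (\<forall>\<rho>. a < \<rho> \<and> \<rho> < b \<longrightarrow> annulus_mean u x a b = g \<rho>))
     \<or> (\<forall>a b. 0 < a \<and> a < b \<and> b \<le> R \<longrightarrow> annulus_mean u x a b = g a)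
     \<or> (\<forall>a b. 0 < a \<and> a < b \<and> b \<le> R \<longrightarrow> annulus_mean u x a b = g b)"
  obtains c where "\<And>a b. 0 < a \<Longrightarrow> a < b \<Longrightarrow> b \<le> R \<Longrightarrow>
    integral (ball x b) u - integral (ball x a) u
      = c * (measure lebesgue (ball x b) - measure lebesgue (ball x a))"
proof -
  define I where "I r = integral (ball x r) u" for r
  define V where "V r = measure lebesgue (ball x r)" for r
  have V: "strict_mono_on {0<..} V"
    using measure_ball_strict_mono[of _ _ x] by (intro strict_mono_onI) (simp add: V_def)
  have mean_iff: "annulus_mean u x a b = q \<longleftrightarrow> I b - I a = q * (V b - V a)"
    if "0 < a" "a < b" "b \<le> R" for a b q
  proof -
    have mean: "annulus_mean u x a b = (I b - I a) / (V b - V a)"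
      using integral_annulus[OF cont that] measure_annulus[OF cont that]
      by (simp add: annulus_mean_def I_def V_def)
    have "V b - V a \<noteq> 0"
      using strict_mono_onD[OF V, of a b] that by simp
    then show ?thesis
      unfolding mean by (simp add: divide_eq_eq)
  qed
  have "\<exists>c. \<forall>a b. 0 < a \<longrightarrow> a < b \<longrightarrow> b \<le> R \<longrightarrow> I b - I a = c * (V b - V a)"
    using means
  proof (elim disjE)
    assume "\<forall>a b. 0 < a \<and> a < b \<and> b \<le> R \<longrightarrow> (\<forall>\<rho>. a < \<rho> \<and> \<rho> < b \<longrightarrow> annulus_mean u x a b = g \<rho>)"
    then have "I b - I a = g \<rho> * (V b - V a)" if "0 < a" "a < \<rho>" "\<rho> < b" "b \<le> R" for a \<rho> b
      using mean_iff[of a b "g \<rho>"] that by auto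
    then show ?thesis
      by (rule proportional_increments_if_interior_point[OF V])
  next
    assume "\<forall>a b. 0 < a \<and> a < b \<and> b \<le> R \<longrightarrow> annulus_mean u x a b = g a"
    then have "I b - I a = g a * (V b - V a)" if "0 < a" "a < b" "b \<le> R" for a b
      using mean_iff[of a b "g a"] that by auto
    then show ?thesis
      by (rule proportional_increments_if_left_endpoint[OF V])
  next
    assume "\<forall>a b. 0 < a \<and> a < b \<and> b \<le> R \<longrightarrow> annulus_mean u x a b = g b"
    then have "I b - I a = g b * (V b - V a)" if "0 < a" "a < b" "b \<le> R" for a b
      using mean_iff[of a b "g b"] that by auto
    then show ?thesis
      by (rule proportional_increments_if_right_endpoint[OF V])
  qed
  then show ?thesis
    using that by (auto simp: I_def V_def)
qed

lemma integral_ball_eq_if_proportional_increments: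
  fixes u :: "'a::euclidean_space \<Rightarrow> real"
  assumes cont: "continuous_on (cball x R) u"
    and incr: "\<And>a b. 0 < a \<Longrightarrow> a < b \<Longrightarrow> b \<le> R \<Longrightarrow>
      integral (ball x b) u - integral (ball x a) u
        = c * (measure lebesgue (ball x b) - measure lebesgue (ball x a))"
    and r: "0 < r" "r \<le> R"
  shows "integral (ball x r) u = c * measure lebesgue (ball x r)"
proof -
  have R: "0 < R"
    using r by simp
  define e where "e = (\<lambda>a. integral (ball x a) u - c * measure lebesgue (ball x a))"
  have "((\<lambda>a. integral (ball x a) (\<lambda>_. 1::real)) \<longlongrightarrow> 0) (at_right 0)"
    by (rule integral_ball_tendsto_0[OF _ R]) simp
  then have "((\<lambda>a. measure lebesgue (ball x a)) \<longlongrightarrow> 0) (at_right 0)"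
    by (simp add: integral_const_lmeasurable)
  then have "(e \<longlongrightarrow> 0 - c * 0) (at_right 0)"
    unfolding e_def by (intro tendsto_diff tendsto_mult_left integral_ball_tendsto_0[OF cont R])
  then have lim: "(e \<longlongrightarrow> 0) (at_right 0)"
    by simp
  have ev: "eventually (\<lambda>a. e r = e a) (at_right 0)"
  proof (rule eventually_at_rightI[of 0 r])
    fix a
    assume "a \<in> {0<..<r}"
    then show "e r = e a"
      using incr[of a r] r by (simp add: e_def algebra_simps)
  qed (use r in simp)
  have "e r = 0"
    using tendsto_cong[OF ev, THEN iffD2, OF lim]
    by (simp add: tendsto_const_iff)
  then show ?thesis
    by (simp add: e_def)
qed

lemma eq_center_value_if_integral_ball_eq:
  fixes u :: "'a::euclidean_space \<Rightarrow> real"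
  assumes cont: "continuous_on (cball x R) u" and "0 < R"
    and balls: "\<And>r. 0 < r \<Longrightarrow> r \<le> R \<Longrightarrow> integral (ball x r) u = c * measure lebesgue (ball x r)"
  shows "c = u x"
proof -
  have "\<bar>c - u x\<bar> \<le> \<epsilon>" if "\<epsilon> > 0" for \<epsilon>
  proof -
    obtain \<delta> where \<delta>: "\<delta> > 0" "\<And>y. y \<in> cball x R \<Longrightarrow> dist y x < \<delta> \<Longrightarrow> dist (u y) (u x) < \<epsilon>"
      using cont \<open>0 < R\<close> \<open>\<epsilon> > 0\<close> unfolding continuous_on_iff by (metis centre_in_cball less_imp_le)
    define r where "r = min \<delta> R"
    have r: "0 < r" "r \<le> R"
      using \<delta> \<open>0 < R\<close> by (auto simp: r_def)
    have int: "u integrable_on ball x r"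
      using r by (intro integrable_on_subset_compact[OF compact_cball cont]) auto
    have "integral (ball x r) (\<lambda>y. u y - u x)
        = integral (ball x r) u - integral (ball x r) (\<lambda>y. u x)"
      by (rule integral_diff[OF int]) (simp add: integrable_on_const)
    then have "(c - u x) * measure lebesgue (ball x r) = integral (ball x r) (\<lambda>y. u y - u x)"
      using balls[OF r] by (simp add: integral_const_lmeasurable left_diff_distrib)
    also have "\<bar>\<dots>\<bar> \<le> \<epsilon> * measure lebesgue (ball x r)"
    proof (rule abs_integral_le_measure)
      show "(\<lambda>y. u y - u x) integrable_on ball x r"
        using int by (intro integrable_diff integrable_on_const) auto
      show "\<bar>u y - u x\<bar> \<le> \<epsilon>" if "y \<in> ball x r" for y
        using \<delta>(2)[of y] that r by (auto simp: r_def dist_real_def dist_commute)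
    qed simp
    finally show ?thesis
      using content_ball_pos[of r x] r by (simp add: abs_mult)
  qed
  then have "\<bar>c - u x\<bar> \<le> 0"
    by (rule field_le_epsilon) simp
  then show ?thesis
    by simp
qed

lemma integral_ball_eq_center_value_if_annulus_means:
  fixes u :: "'a::euclidean_space \<Rightarrow> real" and g :: "real \<Rightarrow> real"
  assumes cont: "continuous_on (cball x R) u" and "0 < R"
    and means:
      "(\<forall>a b. 0 < a \<and> a < b \<and> b \<le> R \<longrightarrow> (\<forall>\<rho>. a < \<rho> \<and> \<rho> < b \<longrightarrow> annulus_mean u x a b = g \<rho>))
     \<or> (\<forall>a b. 0 < a \<and> a < b \<and> b \<le> R \<longrightarrow> annulus_mean u x a b = g a)
     \<or> (\<forall>a b. 0 < a \<and> a < b \<and> b \<le> R \<longrightarrow> annulus_mean u x a b = g b)"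
  shows "integral (ball x R) u = u x * measure lebesgue (ball x R)"
proof -
  obtain c where "\<And>a b. 0 < a \<Longrightarrow> a < b \<Longrightarrow> b \<le> R \<Longrightarrow>
      integral (ball x b) u - integral (ball x a) u
        = c * (measure lebesgue (ball x b) - measure lebesgue (ball x a))"
    using annulus_integrals_proportional[OF cont means] by blast
  then have balls: "\<And>r. 0 < r \<Longrightarrow> r \<le> R \<Longrightarrow> integral (ball x r) u = c * measure lebesgue (ball x r)"
    using integral_ball_eq_if_proportional_increments[OF cont] by blast
  moreover have "c = u x"
    using cont \<open>0 < R\<close> balls by (rule eq_center_value_if_integral_ball_eq)
  ultimately show ?thesis
    using \<open>0 < R\<close> by simp
qed

section \<open>Radial weights\<close>

lemma abs_diff_le_if_local_increments:
  fixes G V :: "real \<Rightarrow> real"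
  assumes "0 < \<delta>" "a \<le> b"
    and step: "\<And>s t. a \<le> s \<Longrightarrow> s \<le> t \<Longrightarrow> t \<le> b \<Longrightarrow> t - s < \<delta> \<Longrightarrow>
      \<bar>G t - G s\<bar> \<le> \<epsilon> * (V t - V s)"
  shows "\<bar>G b - G a\<bar> \<le> \<epsilon> * (V b - V a)"
proof -
  have "\<forall>t. a \<le> t \<and> t \<le> b \<and> t - a \<le> real n * (\<delta> / 2) \<longrightarrow> \<bar>G t - G a\<bar> \<le> \<epsilon> * (V t - V a)" for n
  proof (induction n)
    case 0
    then show ?case by auto
  next
    case (Suc n)
    show ?case
    proof (intro allI impI)
      fix t
      assume t: "a \<le> t \<and> t \<le> b \<and> t - a \<le> real (Suc n) * (\<delta> / 2)"
      define s where "s = max a (t - \<delta> / 2)"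
      have s: "a \<le> s" "s \<le> t" "t - s < \<delta>" "s - a \<le> real n * (\<delta> / 2)"
        using t \<open>0 < \<delta>\<close> mult_nonneg_nonneg[of \<delta> "real n"]
        by (auto simp: s_def algebra_simps max_def)
      then have "\<bar>G s - G a\<bar> \<le> \<epsilon> * (V s - V a)"
        using Suc.IH t by auto
      moreover have "\<bar>G t - G s\<bar> \<le> \<epsilon> * (V t - V s)"
        using step s t by auto
      ultimately show "\<bar>G t - G a\<bar> \<le> \<epsilon> * (V t - V a)"
        by (simp add: algebra_simps abs_le_iff)
    qed
  qed
  moreover obtain n :: nat where "(b - a) / (\<delta> / 2) \<le> real n"
    using real_arch_simple by blast
  ultimately show ?thesis
    using assms(1,2) by (simp add: field_simps)
qed

lemma abs_integral_shell_le:
  fixes v w :: "'a::euclidean_space \<Rightarrow> real"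
  assumes cont_v: "continuous_on (cball x R) v" and cont_w: "continuous_on (cball x R) w"
    and zero: "\<And>r. 0 \<le> r \<Longrightarrow> r \<le> R \<Longrightarrow> integral (ball x r) v = 0"
    and st: "0 \<le> s" "s \<le> t" "t \<le> R"
    and v_bound: "\<And>y. y \<in> cball x R \<Longrightarrow> \<bar>v y\<bar> \<le> M"
    and w_close: "\<And>y. s \<le> dist x y \<Longrightarrow> dist x y \<le> t \<Longrightarrow> \<bar>w y - c\<bar> \<le> \<epsilon>"
  shows "\<bar>integral (ball x t - ball x s) (\<lambda>y. v y * w y)\<bar>
    \<le> M * \<epsilon> * measure lebesgue (ball x t - ball x s)"
proof -
  define A where "A = ball x t - ball x s"
  have A: "A \<in> lmeasurable" "A \<subseteq> cball x R"
    using st by (auto simp: A_def)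
  note integrable = integrable_on_subset_compact[OF compact_cball _ _ A(2)]
  have "ball x s - ball x t = {}"
    using st by auto
  then have "integral A v = integral (ball x t) v - integral (ball x s) v"
    unfolding A_def using st
    by (intro integral_setdiff integrable_on_subset_compact[OF compact_cball cont_v]) auto
  then have "integral A v = 0"
    using zero st by simp
  moreover have "integral A (\<lambda>y. v y * w y) = integral A (\<lambda>y. v y * (w y - c)) + c * integral A v"
    using A cont_v cont_w
    by (simp add: algebra_simps integral_diff integrable integral_mult_left integrable_diff
        integrable_on_const continuous_intros)
  ultimately have "integral A (\<lambda>y. v y * w y) = integral A (\<lambda>y. v y * (w y - c))"
    by simp
  also have "\<bar>\<dots>\<bar> \<le> M * \<epsilon> * measure lebesgue A"
  proof (rule abs_integral_le_measure[OF A(1)])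
    show "(\<lambda>y. v y * (w y - c)) integrable_on A"
      using A by (intro integrable continuous_intros cont_v cont_w) auto
    show "\<bar>v y * (w y - c)\<bar> \<le> M * \<epsilon>" if "y \<in> A" for y
      using that A v_bound[of y] w_close[of y] by (auto simp: A_def abs_mult intro!: mult_mono')
  qed
  finally show ?thesis
    by (simp add: A_def)
qed

lemma abs_integral_ball_radial_weight_le:
  fixes v :: "'a::euclidean_space \<Rightarrow> real" and \<psi> :: "real \<Rightarrow> real"
  assumes cont_v: "continuous_on (cball x R) v" and psi: "continuous_on {0..R} \<psi>" and "0 \<le> R"
    and zero: "\<And>r. 0 \<le> r \<Longrightarrow> r \<le> R \<Longrightarrow> integral (ball x r) v = 0"
    and v_bound: "\<And>y. y \<in> cball x R \<Longrightarrow> \<bar>v y\<bar> \<le> M"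
    and "0 < \<delta>" and \<delta>: "\<And>s t. 0 \<le> s \<Longrightarrow> s \<le> t \<Longrightarrow> t \<le> R \<Longrightarrow> t - s < \<delta> \<Longrightarrow> \<bar>\<psi> t - \<psi> s\<bar> \<le> \<epsilon>"
  shows "\<bar>integral (ball x R) (\<lambda>y. v y * \<psi> (dist x y))\<bar> \<le> M * \<epsilon> * measure lebesgue (ball x R)"
proof -
  define G where "G r = integral (ball x r) (\<lambda>y. v y * \<psi> (dist x y))" for r
  define V where "V r = measure lebesgue (ball x r)" for r
  have cont_w: "continuous_on (cball x R) (\<lambda>y. \<psi> (dist x y))"
    by (rule continuous_on_compose2[OF psi]) (auto intro: continuous_intros)
  have "\<bar>G R - G 0\<bar> \<le> (M * \<epsilon>) * (V R - V 0)"
  proof (rule abs_diff_le_if_local_increments[OF \<open>0 < \<delta>\<close> \<open>0 \<le> R\<close>])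
    fix s t
    assume st: "0 \<le> s" "s \<le> t" "t \<le> R" "t - s < \<delta>"
    have "ball x s - ball x t = {}"
      using st by auto
    then have "G t - G s = integral (ball x t - ball x s) (\<lambda>y. v y * \<psi> (dist x y))"
      unfolding G_def using st
      by (intro integral_setdiff[symmetric] integrable_on_subset_compact[OF compact_cball, of x R]
          continuous_intros cont_v cont_w) auto
    also have "\<bar>\<dots>\<bar> \<le> M * \<epsilon> * measure lebesgue (ball x t - ball x s)"
      using st v_bound \<delta>[of s]
      by (intro abs_integral_shell_le[OF cont_v cont_w zero, where c = "\<psi> s"]) auto
    also have "measure lebesgue (ball x t - ball x s) = V t - V s"
      unfolding V_def using st emeasure_lborel_ball_finite[of x t] by (intro measure_Diff) auto
    finally show "\<bar>G t - G s\<bar> \<le> M * \<epsilon> * (V t - V s)" .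
  qed
  then show ?thesis
    by (simp add: G_def V_def)
qed

lemma integral_ball_radial_weight_eq_0:
  fixes v :: "'a::euclidean_space \<Rightarrow> real" and \<psi> :: "real \<Rightarrow> real"
  assumes cont_v: "continuous_on (cball x R) v" and psi: "continuous_on {0..R} \<psi>"
    and zero: "\<And>r. 0 \<le> r \<Longrightarrow> r \<le> R \<Longrightarrow> integral (ball x r) v = 0"
  shows "integral (ball x R) (\<lambda>y. v y * \<psi> (dist x y)) = 0"
proof (cases "R < 0")
  case False
  obtain M where M: "\<forall>y\<in>cball x R. \<bar>v y\<bar> \<le> M"
    using compact_imp_bounded[OF compact_continuous_image[OF cont_v compact_cball]]
    by (auto simp: bounded_real)
  define I where "I = integral (ball x R) (\<lambda>y. v y * \<psi> (dist x y))"
  have "\<bar>I\<bar> \<le> M * \<epsilon> * measure lebesgue (ball x R)" if "\<epsilon> > 0" for \<epsilon>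
  proof -
    obtain \<delta> where "\<delta> > 0"
      and \<delta>: "\<And>s t. s \<in> {0..R} \<Longrightarrow> t \<in> {0..R} \<Longrightarrow> dist t s < \<delta> \<Longrightarrow> dist (\<psi> t) (\<psi> s) < \<epsilon>"
      using compact_uniformly_continuous[OF psi compact_Icc] \<open>\<epsilon> > 0\<close>
      unfolding uniformly_continuous_on_def by metis
    show ?thesis
      unfolding I_def using False M \<delta>
      by (intro abs_integral_ball_radial_weight_le[OF cont_v psi _ zero _ \<open>\<delta> > 0\<close>])
        (auto simp: dist_real_def less_imp_le)
  qed
  then have "\<bar>I\<bar> \<le> M * 0 * measure lebesgue (ball x R)"
  proof (intro tendsto_le[of "at_right 0" "\<lambda>\<epsilon>. M * \<epsilon> * measure lebesgue (ball x R)" _ "\<lambda>_. \<bar>I\<bar>"])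
    show "((\<lambda>\<epsilon>. M * \<epsilon> * measure lebesgue (ball x R))
        \<longlongrightarrow> M * 0 * measure lebesgue (ball x R)) (at_right 0)"
      by (intro tendsto_mult tendsto_const tendsto_ident_at)
  qed (auto intro: eventually_at_rightI[of 0 1])
  then show ?thesis
    by (simp add: I_def)
qed (simp add: ball_empty)

lemma integral_ball_radial_weight:
  fixes u :: "'a::euclidean_space \<Rightarrow> real" and \<psi> :: "real \<Rightarrow> real"
  assumes cont: "continuous_on (cball x R) u" and psi: "continuous_on {0..R} \<psi>"
    and mvp: "\<And>r. 0 < r \<Longrightarrow> r \<le> R \<Longrightarrow> integral (ball x r) u = u x * measure lebesgue (ball x r)"
  shows "integral (ball x R) (\<lambda>y. u y * \<psi> (dist x y))
    = u x * integral (ball x R) (\<lambda>y. \<psi> (dist x y))"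
proof -
  note integrable = integrable_on_subset_compact[OF compact_cball[of x R]]
  have cont_w: "continuous_on (cball x R) (\<lambda>y. \<psi> (dist x y))"
    by (rule continuous_on_compose2[OF psi]) (auto intro: continuous_intros)
  have "integral (ball x r) (\<lambda>y. u y - u x) = 0" if "0 \<le> r" "r \<le> R" for r
  proof (cases "r = 0")
    case False
    have "integral (ball x r) (\<lambda>y. u y - u x)
        = integral (ball x r) u - integral (ball x r) (\<lambda>y. u x)"
      using that by (intro integral_diff integrable[OF cont] integrable_on_const) auto
    then show ?thesis
      using mvp[of r] that False by (simp add: integral_const_lmeasurable)
  qed simp
  then have "integral (ball x R) (\<lambda>y. (u y - u x) * \<psi> (dist x y)) = 0"
    by (intro integral_ball_radial_weight_eq_0[OF _ psi]) (auto intro: continuous_intros cont)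
  then show ?thesis
    by (simp add: left_diff_distrib integral_diff integrable[OF _ _ ball_subset_cball]
        continuous_intros cont cont_w)
qed

lemma integral_cbox_radial_weight:
  fixes u :: "'a::euclidean_space \<Rightarrow> real" and P :: "real \<Rightarrow> real"
  assumes cont: "continuous_on (cbox a b) u" and sub: "cball x r \<subseteq> cbox a b"
    and P: "continuous_on {0..r} P" "\<And>t. r \<le> t \<Longrightarrow> P t = 0"
    and mvp: "\<And>s. 0 < s \<Longrightarrow> s \<le> r \<Longrightarrow> integral (ball x s) u = u x * measure lebesgue (ball x s)"
  shows "integral (cbox a b) (\<lambda>y. u y * P (dist x y))
    = u x * integral (cbox a b) (\<lambda>y. P (dist x y))"
proof -
  have restrict: "integral (cbox a b) (\<lambda>y. w y * P (dist x y))
      = integral (ball x r) (\<lambda>y. w y * P (dist x y))"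
    for w :: "'a \<Rightarrow> real"
    using sub P(2) by (intro integral_eq_if_zero_outside) auto
  have "integral (ball x r) (\<lambda>y. u y * P (dist x y)) = u x * integral (ball x r) (\<lambda>y. P (dist x y))"
    using continuous_on_subset[OF cont sub] P(1) mvp by (rule integral_ball_radial_weight)
  then show ?thesis
    using restrict[of u] restrict[of "\<lambda>_. 1"] by simp
qed

section \<open>Smoothing by a radial profile\<close>

lemma has_derivative_integral_cbox_param:
  fixes f :: "'a::euclidean_space \<Rightarrow> 'b::euclidean_space \<Rightarrow> real"
  assumes deriv: "\<And>x t. t \<in> cbox a b \<Longrightarrow> ((\<lambda>x. f x t) has_derivative blinfun_apply (f' x t)) (at x)"
    and cont_f: "\<And>x. continuous_on (cbox a b) (f x)"
    and cont_f': "continuous_on (UNIV \<times> cbox a b) (\<lambda>(x, t). f' x t)"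
  shows "((\<lambda>x. integral (cbox a b) (f x))
    has_derivative (\<lambda>h. integral (cbox a b) (\<lambda>t. f' x t h))) (at x)"
proof -
  have "continuous_on (cbox a b) (\<lambda>t. (\<lambda>(x, t). f' x t) (x, t))"
    by (rule continuous_on_compose2[OF cont_f']) (auto intro: continuous_intros)
  then have "f' x integrable_on cbox a b"
    by (simp add: integrable_continuous)
  moreover have
    "((\<lambda>x. integral (cbox a b) (f x)) has_derivative integral (cbox a b) (f' x)) (at x within UNIV)"
    using deriv cont_f' by (intro leibniz_rule integrable_continuous cont_f) auto
  ultimately show ?thesis
    by (auto simp: blinfun_apply_integral fun_eq_iff elim!: has_derivative_eq_rhs)
qed

lemma has_derivative_inner_diff_self:
  "((\<lambda>x. (t - x) \<bullet> (t - x)) has_derivative (\<lambda>h. -2 * ((t - x) \<bullet> h))) (at x within S)"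
  by (rule has_derivative_eq_rhs[OF has_derivative_inner[OF
        has_derivative_diff[OF has_derivative_const has_derivative_ident]
        has_derivative_diff[OF has_derivative_const has_derivative_ident]]])
    (auto simp: fun_eq_iff algebra_simps inner_commute)

locale C2_profile =
  fixes k k' k'' :: "real \<Rightarrow> real"
  assumes has_real_derivative_profile: "\<And>s. (k has_real_derivative k' s) (at s)"
    and has_real_derivative_profile': "\<And>s. (k' has_real_derivative k'' s) (at s)"
    and continuous_profile'': "continuous_on UNIV k''"
begin

lemma continuous_on_profile [continuous_intros]:
  "continuous_on S f \<Longrightarrow> continuous_on S (\<lambda>x. k (f x))"
  "continuous_on S f \<Longrightarrow> continuous_on S (\<lambda>x. k' (f x))"
  "continuous_on S f \<Longrightarrow> continuous_on S (\<lambda>x. k'' (f x))"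
proof -
  have "continuous_on UNIV k" "continuous_on UNIV k'"
    using DERIV_isCont[OF has_real_derivative_profile] DERIV_isCont[OF has_real_derivative_profile']
    by (auto intro: continuous_at_imp_continuous_on)
  then show "continuous_on S f \<Longrightarrow> continuous_on S (\<lambda>x. k (f x))"
    "continuous_on S f \<Longrightarrow> continuous_on S (\<lambda>x. k' (f x))"
    "continuous_on S f \<Longrightarrow> continuous_on S (\<lambda>x. k'' (f x))"
    using continuous_profile'' by (auto intro: continuous_on_compose2)
qed

definition smoothing :: "('a::euclidean_space \<Rightarrow> real) \<Rightarrow> 'a \<Rightarrow> 'a \<Rightarrow> 'a \<Rightarrow> real" where
  "smoothing w a b x = integral (cbox a b) (\<lambda>y. w y * k ((y - x) \<bullet> (y - x)))"

definition smoothing_deriv :: "('a::euclidean_space \<Rightarrow> real) \<Rightarrow> 'a \<Rightarrow> 'a \<Rightarrow> 'a \<Rightarrow> 'a \<Rightarrow> real" where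
  "smoothing_deriv w a b x h =
     integral (cbox a b) (\<lambda>y. w y * (-2 * k' ((y - x) \<bullet> (y - x)) * ((y - x) \<bullet> h)))"

definition smoothing_deriv2 :: "('a::euclidean_space \<Rightarrow> real) \<Rightarrow> 'a \<Rightarrow> 'a \<Rightarrow> 'a \<Rightarrow> 'a \<Rightarrow> 'a \<Rightarrow> real" where
  "smoothing_deriv2 w a b x h l =
     integral (cbox a b) (\<lambda>y. w y * (4 * k'' ((y - x) \<bullet> (y - x)) * ((y - x) \<bullet> h) * ((y - x) \<bullet> l)
       + 2 * k' ((y - x) \<bullet> (y - x)) * (h \<bullet> l)))"

lemma has_derivative_smoothing:
  assumes w: "continuous_on (cbox a b) w"
  shows "(smoothing w a b has_derivative smoothing_deriv w a b x) (at x)"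
proof -
  have w': "continuous_on (UNIV \<times> cbox a b) (\<lambda>p. w (snd p))"
    by (rule continuous_on_compose2[OF w continuous_on_snd]) auto
  have "((\<lambda>x. integral (cbox a b) (\<lambda>y. w y * k ((y - x) \<bullet> (y - x)))) has_derivative
      (\<lambda>h. integral (cbox a b) (\<lambda>y. blinfun_apply
         ((w y * (-2 * k' ((y - x) \<bullet> (y - x)))) *\<^sub>R blinfun_inner_left (y - x)) h))) (at x)"
  proof (rule has_derivative_integral_cbox_param)
    fix x t :: 'a
    show "((\<lambda>x. w t * k ((t - x) \<bullet> (t - x))) has_derivative
        blinfun_apply ((w t * (-2 * k' ((t - x) \<bullet> (t - x)))) *\<^sub>R blinfun_inner_left (t - x))) (at x)"
      by (rule has_derivative_eq_rhs[OF has_derivative_mult_right[OF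
            DERIV_compose_FDERIV[OF has_real_derivative_profile has_derivative_inner_diff_self]]])
        (auto simp: fun_eq_iff algebra_simps inner_commute scaleR_blinfun.rep_eq uminus_blinfun.rep_eq)
  qed (auto simp: split_beta intro!: continuous_intros w w')
  then show ?thesis
    unfolding smoothing_def[abs_def]
    by (rule has_derivative_eq_rhs)
      (auto simp: fun_eq_iff smoothing_deriv_def scaleR_blinfun.rep_eq uminus_blinfun.rep_eq inner_commute
        intro!: integral_cong)
qed

lemma has_derivative_smoothing_deriv:
  assumes w: "continuous_on (cbox a b) w"
  shows "((\<lambda>x. smoothing_deriv w a b x h) has_derivative smoothing_deriv2 w a b x h) (at x)"
proof -
  have w': "continuous_on (UNIV \<times> cbox a b) (\<lambda>p. w (snd p))"
    by (rule continuous_on_compose2[OF w continuous_on_snd]) auto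
  have "((\<lambda>x. integral (cbox a b) (\<lambda>y. w y * (-2 * k' ((y - x) \<bullet> (y - x)) * ((y - x) \<bullet> h)))) has_derivative
      (\<lambda>l. integral (cbox a b) (\<lambda>y. blinfun_apply
         ((w y * 4 * k'' ((y - x) \<bullet> (y - x)) * ((y - x) \<bullet> h)) *\<^sub>R blinfun_inner_left (y - x)
          + (w y * 2 * k' ((y - x) \<bullet> (y - x))) *\<^sub>R blinfun_inner_left h) l))) (at x)"
  proof (rule has_derivative_integral_cbox_param)
    fix x t :: 'a
    have "((\<lambda>x. (t - x) \<bullet> h) has_derivative (\<lambda>l. - (l \<bullet> h))) (at x)"
      by (rule has_derivative_eq_rhs, (rule derivative_eq_intros)+) auto
    then show "((\<lambda>x. w t * (-2 * k' ((t - x) \<bullet> (t - x)) * ((t - x) \<bullet> h))) has_derivative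
        blinfun_apply ((w t * 4 * k'' ((t - x) \<bullet> (t - x)) * ((t - x) \<bullet> h)) *\<^sub>R blinfun_inner_left (t - x)
          + (w t * 2 * k' ((t - x) \<bullet> (t - x))) *\<^sub>R blinfun_inner_left h)) (at x)"
      by (rule has_derivative_eq_rhs[OF has_derivative_mult_right[OF has_derivative_mult[OF
            has_derivative_mult_right[OF DERIV_compose_FDERIV[OF has_real_derivative_profile'
              has_derivative_inner_diff_self]]]]])
        (auto simp: fun_eq_iff algebra_simps inner_commute scaleR_blinfun.rep_eq uminus_blinfun.rep_eq
          plus_blinfun.rep_eq minus_blinfun.rep_eq)
  qed (auto simp: split_beta intro!: continuous_intros w w')
  then show ?thesis
    unfolding smoothing_deriv_def[abs_def]
    by (rule has_derivative_eq_rhs)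
      (auto simp: fun_eq_iff smoothing_deriv2_def scaleR_blinfun.rep_eq plus_blinfun.rep_eq
        minus_blinfun.rep_eq inner_commute algebra_simps intro!: integral_cong)
qed

lemma continuous_on_smoothing_deriv2:
  assumes w: "continuous_on (cbox a b) w"
  shows "continuous_on S (\<lambda>x. smoothing_deriv2 w a b x h l)"
proof -
  have w': "continuous_on (UNIV \<times> cbox a b) (\<lambda>p. w (snd p))"
    by (rule continuous_on_compose2[OF w continuous_on_snd]) auto
  have "continuous_on UNIV (\<lambda>x. smoothing_deriv2 w a b x h l)"
    unfolding smoothing_deriv2_def
    by (rule integral_continuous_on_param) (simp add: split_beta, intro continuous_intros w')
  then show ?thesis
    by (rule continuous_on_subset) simp
qed

lemma sum_smoothing_deriv2_Basis:
  fixes x :: "'a::euclidean_space"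
  assumes w: "continuous_on (cbox a b) w"
  shows "(\<Sum>i\<in>Basis. smoothing_deriv2 w a b x i i) = integral (cbox a b)
    (\<lambda>y. w y * (4 * k'' ((y - x) \<bullet> (y - x)) * ((y - x) \<bullet> (y - x))
       + 2 * real DIM('a) * k' ((y - x) \<bullet> (y - x))))"
proof -
  have "(\<Sum>i\<in>Basis. smoothing_deriv2 w a b x i i) = integral (cbox a b) (\<lambda>y. \<Sum>i\<in>Basis.
      w y * (4 * k'' ((y - x) \<bullet> (y - x)) * ((y - x) \<bullet> i) * ((y - x) \<bullet> i) + 2 * k' ((y - x) \<bullet> (y - x)) * (i \<bullet> i)))"
    unfolding smoothing_deriv2_def
    by (rule integral_sum[symmetric]) (auto intro!: integrable_continuous continuous_intros w)
  also have "\<dots> = integral (cbox a b) (\<lambda>y. w y * (4 * k'' ((y - x) \<bullet> (y - x)) * ((y - x) \<bullet> (y - x))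
       + 2 * real DIM('a) * k' ((y - x) \<bullet> (y - x))))"
  proof -
    have "(\<Sum>i\<in>Basis. c * (4 * p * (z \<bullet> i) * (z \<bullet> i) + 2 * q * (i \<bullet> i)))
        = c * (4 * p * (z \<bullet> z) + 2 * real DIM('a) * q)" for c p q :: real and z :: 'a
    proof -
      have "(\<Sum>i\<in>Basis. c * (4 * p * (z \<bullet> i) * (z \<bullet> i) + 2 * q * (i \<bullet> i)))
          = (\<Sum>i\<in>Basis. 4 * c * p * ((z \<bullet> i) * (z \<bullet> i)) + 2 * c * q)"
        by (intro sum.cong) (auto simp: algebra_simps)
      also have "\<dots> = 4 * c * p * (\<Sum>i\<in>Basis. (z \<bullet> i) * (z \<bullet> i)) + real DIM('a) * (2 * c * q)"
        by (simp add: sum.distrib flip: sum_distrib_left)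
      also have "(\<Sum>i\<in>Basis. (z \<bullet> i) * (z \<bullet> i)) = z \<bullet> z"
        by (rule euclidean_inner[symmetric])
      finally show ?thesis
        by (simp add: algebra_simps)
    qed
    then show ?thesis
      by simp
  qed
  finally show ?thesis .
qed

lemma smoothing_deriv2_eq_0_if_constant:
  assumes w: "continuous_on (cbox a b) w" and U: "open U" "x \<in> U"
    and const: "\<And>z. z \<in> U \<Longrightarrow> smoothing w a b z = C"
  shows "smoothing_deriv2 w a b x h l = 0"
proof -
  have deriv: "smoothing_deriv w a b z = (\<lambda>_. 0)" if "z \<in> U" for z
  proof (rule has_derivative_unique[OF has_derivative_smoothing[OF w]])
    show "(smoothing w a b has_derivative (\<lambda>_. 0)) (at z)"
      using const
      by (intro has_derivative_transform_within_open[OF has_derivative_const U(1) that]) simp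
  qed
  have "smoothing_deriv2 w a b x h = (\<lambda>_. 0)"
  proof (rule has_derivative_unique[OF has_derivative_smoothing_deriv[OF w]])
    show "((\<lambda>z. smoothing_deriv w a b z h) has_derivative (\<lambda>_. 0)) (at x)"
      using deriv by (intro has_derivative_transform_within_open[OF has_derivative_const U]) simp
  qed
  then show ?thesis
    by simp
qed

lemma harmonic_on_smoothing:
  assumes w: "continuous_on (cbox a b) w"
    and laplace: "\<And>x. x \<in> U \<Longrightarrow> (\<Sum>i\<in>Basis. smoothing_deriv2 w a b x i i) = 0"
  shows "harmonic_on U (\<lambda>x. c * smoothing w a b x)"
  unfolding harmonic_on_def
proof (intro exI conjI ballI allI)
  fix x
  show "((\<lambda>x. c * smoothing w a b x) has_derivative (\<lambda>h. c * smoothing_deriv w a b x h)) (at x)"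
    by (rule has_derivative_mult_right[OF has_derivative_smoothing[OF w]])
  fix v
  show "((\<lambda>x. c * smoothing_deriv w a b x v)
    has_derivative (\<lambda>h. c * smoothing_deriv2 w a b x v h)) (at x)"
    by (rule has_derivative_mult_right[OF has_derivative_smoothing_deriv[OF w]])
next
  fix v h
  show "continuous_on U (\<lambda>x. c * smoothing_deriv2 w a b x v h)"
    by (intro continuous_intros continuous_on_smoothing_deriv2[OF w])
next
  fix x
  assume "x \<in> U"
  then show "(\<Sum>i\<in>Basis. c * smoothing_deriv2 w a b x i i) = 0"
    using laplace by (simp flip: sum_distrib_left)
qed

end

lemma harmonic_on_cong:
  assumes U: "open U" and eq: "\<And>x. x \<in> U \<Longrightarrow> f x = g x" and f: "harmonic_on U f"
  shows "harmonic_on U g"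
proof -
  obtain f' f'' where d1: "\<forall>x\<in>U. (f has_derivative f' x) (at x)"
    and rest: "\<forall>x\<in>U. \<forall>v. ((\<lambda>y. f' y v) has_derivative f'' x v) (at x)"
      "\<forall>v w. continuous_on U (\<lambda>x. f'' x v w)" "\<forall>x\<in>U. (\<Sum>b\<in>Basis. f'' x b b) = 0"
    using f unfolding harmonic_on_def by blast
  have "\<forall>x\<in>U. (g has_derivative f' x) (at x)"
    using d1 eq by (blast intro: has_derivative_transform_within_open[OF _ U])
  then show ?thesis
    using rest unfolding harmonic_on_def by blast
qed

lemma harmonic_on_frechet_derivatives:
  fixes u :: "'a::euclidean_space \<Rightarrow> real"
  assumes U: "open U" and "harmonic_on U u"
    and u'_def: "u' = (\<lambda>x. frechet_derivative u (at x))"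
    and u''_def: "u'' = (\<lambda>x v. frechet_derivative (\<lambda>y. u' y v) (at x))"
  shows "\<forall>x\<in>U. (u has_derivative u' x) (at x)"
    and "\<forall>x\<in>U. \<forall>v. ((\<lambda>y. u' y v) has_derivative u'' x v) (at x)"
    and "\<forall>v w. continuous_on U (\<lambda>x. u'' x v w)"
    and "\<forall>x\<in>U. (\<Sum>b\<in>Basis. u'' x b b) = 0"
proof -
  obtain v' v'' where d1: "\<forall>y\<in>U. (u has_derivative v' y) (at y)"
    and d2: "\<forall>y\<in>U. \<forall>v. ((\<lambda>z. v' z v) has_derivative v'' y v) (at y)"
    and cont: "\<forall>v w. continuous_on U (\<lambda>y. v'' y v w)"
    and laplace: "\<forall>y\<in>U. (\<Sum>b\<in>Basis. v'' y b b) = 0"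
    using \<open>harmonic_on U u\<close> unfolding harmonic_on_def by blast
  have u': "u' y = v' y" if "y \<in> U" for y
    using frechet_derivative_at[OF d1[rule_format, OF that]] by (simp add: u'_def)
  have d2': "((\<lambda>z. u' z v) has_derivative v'' y v) (at y)" if "y \<in> U" for y v
    by (rule has_derivative_transform_within_open[OF d2[rule_format, OF that] U that])
      (simp add: u')
  have u'': "u'' y v = v'' y v" if "y \<in> U" for y v
    using frechet_derivative_at[OF d2'[OF that]] by (simp add: u''_def)
  show "\<forall>x\<in>U. (u has_derivative u' x) (at x)"
    using d1 u' by simp
  show "\<forall>x\<in>U. \<forall>v. ((\<lambda>y. u' y v) has_derivative u'' x v) (at x)"
    using d2' u'' by simp
  show "\<forall>v w. continuous_on U (\<lambda>x. u'' x v w)"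
    using cont by (auto intro: continuous_on_eq simp: u'')
  show "\<forall>x\<in>U. (\<Sum>b\<in>Basis. u'' x b b) = 0"
    using laplace u'' by simp
qed

lemma harmonic_on_if_locally_harmonic:
  fixes u :: "'a::euclidean_space \<Rightarrow> real"
  assumes locally: "\<And>x. x \<in> D \<Longrightarrow> \<exists>U. open U \<and> x \<in> U \<and> harmonic_on U u"
  shows "harmonic_on D u"
proof -
  txt \<open>By uniqueness of derivatives, the canonical witnesses work on every open set where u is
    harmonic, so they work on D.\<close>
  define u' where "u' = (\<lambda>x. frechet_derivative u (at x))"
  define u'' where "u'' = (\<lambda>x v. frechet_derivative (\<lambda>y. u' y v) (at x))"
  note canonical = harmonic_on_frechet_derivatives[OF _ _ u'_def u''_def]
  show ?thesis
    unfolding harmonic_on_def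
  proof (intro exI[of _ u'] exI[of _ u''] conjI ballI allI continuous_at_imp_continuous_on)
    fix x v w
    assume "x \<in> D"
    then obtain U where U: "open U" "x \<in> U" "harmonic_on U u"
      using locally by blast
    show "(u has_derivative u' x) (at x)" "((\<lambda>y. u' y v) has_derivative u'' x v) (at x)"
      "(\<Sum>b\<in>Basis. u'' x b b) = 0"
      using canonical[OF U(1,3)] U(2) by blast+
    show "isCont (\<lambda>x. u'' x v w) x"
      using canonical(3)[OF U(1,3)] U(1,2) continuous_on_eq_continuous_at by blast
  qed
qed

section \<open>A twice differentiable radial kernel\<close>

lemma has_real_derivative_max0_power:
  fixes t :: real
  assumes "2 \<le> k"
  shows "((\<lambda>t. max 0 t ^ k) has_real_derivative real k * max 0 t ^ (k - 1)) (at t)"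
proof (cases t "0::real" rule: linorder_cases)
  case less
  have "((\<lambda>t. 0) has_real_derivative 0) (at t)"
    by simp
  then have "((\<lambda>t. max 0 t ^ k) has_real_derivative 0) (at t)"
    by (rule has_field_derivative_transform_within_open[where S = "{..<0}"])
      (use less assms in auto)
  then show ?thesis
    using less assms by (simp add: zero_power)
next
  case greater
  have "((\<lambda>t. t ^ k) has_real_derivative real k * max 0 t ^ (k - 1)) (at t)"
    using greater by (intro derivative_eq_intros) auto
  then show ?thesis
    by (rule has_field_derivative_transform_within_open[where S = "{0<..}"]) (use greater in auto)
next
  case equal
  have "((\<lambda>h::real. max 0 h ^ k / h) \<longlongrightarrow> 0) (at 0)"
  proof (rule Lim_null_comparison)
    show "\<forall>\<^sub>F h in at 0. norm (max 0 h ^ k / h) \<le> \<bar>h\<bar> ^ (k - 1)"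
    proof (intro always_eventually allI)
      fix h :: real
      show "norm (max 0 h ^ k / h) \<le> \<bar>h\<bar> ^ (k - 1)"
      proof (cases "h > 0")
        case True
        obtain j where "k = Suc (Suc j)"
          using assms by (metis add_2_eq_Suc le_Suc_ex)
        then show ?thesis
          using True by simp
      qed (use assms in \<open>simp add: max_def zero_power\<close>)
    qed
    show "((\<lambda>h. \<bar>h\<bar> ^ (k - 1)) \<longlongrightarrow> 0) (at (0::real))"
      using assms by (auto intro!: tendsto_eq_intros)
  qed
  then show ?thesis
    using equal assms by (simp add: DERIV_def zero_power)
qed

text \<open>The kernel (r^2 - |z|^2)_+^3 as a function of s = |z|^2; bump' and bump'' are its
  derivatives in s.\<close>

definition bump :: "real \<Rightarrow> real \<Rightarrow> real" where
  "bump r s = max 0 (r\<^sup>2 - s) ^ 3"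

definition bump' :: "real \<Rightarrow> real \<Rightarrow> real" where
  "bump' r s = - 3 * max 0 (r\<^sup>2 - s) ^ 2"

definition bump'' :: "real \<Rightarrow> real \<Rightarrow> real" where
  "bump'' r s = 6 * max 0 (r\<^sup>2 - s)"

interpretation bump: C2_profile "bump r" "bump' r" "bump'' r" for r
proof
  fix s
  have "((\<lambda>s. max 0 (r\<^sup>2 - s) ^ 3) has_real_derivative real 3 * max 0 (r\<^sup>2 - s) ^ (3 - 1) * -1) (at s)"
    by (rule DERIV_chain2[OF has_real_derivative_max0_power]) (auto intro!: derivative_eq_intros)
  then show "(bump r has_real_derivative bump' r s) (at s)"
    by (simp add: bump_def[abs_def] bump'_def)
  have "((\<lambda>s. max 0 (r\<^sup>2 - s) ^ 2) has_real_derivative real 2 * max 0 (r\<^sup>2 - s) ^ (2 - 1) * -1) (at s)"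
    by (rule DERIV_chain2[OF has_real_derivative_max0_power]) (auto intro!: derivative_eq_intros)
  then show "(bump' r has_real_derivative bump'' r s) (at s)"
    unfolding bump'_def[abs_def] bump''_def by (auto dest: DERIV_cmult[where c = "-3"])
  show "continuous_on UNIV (bump'' r)"
    unfolding bump''_def[abs_def] by (intro continuous_intros)
qed

lemma bump_eq_0:
  assumes "r\<^sup>2 \<le> s"
  shows "bump r s = 0" "bump' r s = 0" "bump'' r s = 0"
  using assms by (auto simp: bump_def bump'_def bump''_def max_def)

lemma integral_bump_pos:
  assumes "0 < r"
  shows "0 < integral (ball (0::'a::euclidean_space) r) (\<lambda>z. bump r (z \<bullet> z))"
proof -
  have cont: "continuous_on (cball (0::'a) r) (\<lambda>z. bump r (z \<bullet> z))"
    by (intro continuous_intros)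
  have "0 < bump r (r\<^sup>2 / 4) * measure lebesgue (ball (0::'a) (r/2))"
    using assms by (simp add: bump_def)
  also have "\<dots> = integral (ball (0::'a) (r/2)) (\<lambda>z. bump r (r\<^sup>2 / 4))"
    by (simp add: integral_const_lmeasurable)
  also have "\<dots> \<le> integral (ball (0::'a) (r/2)) (\<lambda>z. bump r (z \<bullet> z))"
  proof (rule integral_le)
    show "(\<lambda>z. bump r (z \<bullet> z)) integrable_on ball (0::'a) (r/2)"
      using assms by (intro integrable_on_subset_compact[OF compact_cball cont]) auto
    fix z :: 'a
    assume "z \<in> ball 0 (r/2)"
    then have "z \<bullet> z \<le> r\<^sup>2 / 4"
      using power_mono[of "norm z" "r/2" 2] by (simp add: power2_norm_eq_inner power_divide)
    then show "bump r (r\<^sup>2 / 4) \<le> bump r (z \<bullet> z)"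
      unfolding bump_def by (intro power_mono max.mono) auto
  qed (simp add: integrable_on_const)
  also have "\<dots> \<le> integral (ball (0::'a) r) (\<lambda>z. bump r (z \<bullet> z))"
    using assms
    by (intro integral_subset_le integrable_on_subset_compact[OF compact_cball cont])
      (auto simp: bump_def)
  finally show ?thesis .
qed

lemma bump_smoothing_const:
  fixes x :: "'a::euclidean_space"
  assumes "0 < r" "ball x r \<subseteq> cbox a b"
  shows "bump.smoothing r (\<lambda>_. 1) a b x = integral (ball (0::'a) r) (\<lambda>z. bump r (z \<bullet> z))"
proof -
  have "bump.smoothing r (\<lambda>_. 1) a b x = integral (cbox (a - x) (b - x)) (\<lambda>z. bump r (z \<bullet> z))"
    unfolding bump.smoothing_def
    using integral_shift_cbox[where f = "\<lambda>y. 1 * bump r ((y - x) \<bullet> (y - x))" and c = x] by simp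
  also have "\<dots> = integral (ball (0::'a) r) (\<lambda>z. bump r (z \<bullet> z))"
  proof (rule integral_eq_if_zero_outside)
    show "ball 0 r \<subseteq> cbox (a - x) (b - x)"
    proof
      fix z :: 'a
      assume "z \<in> ball 0 r"
      then have "z + x \<in> cbox a b"
        using assms(2) by (auto simp: dist_norm)
      then show "z \<in> cbox (a - x) (b - x)"
        by (auto simp: mem_box algebra_simps inner_simps)
    qed
    show "bump r (z \<bullet> z) = 0" if "z \<notin> ball 0 r" for z :: 'a
      using that assms(1) power_mono[of r "norm z" 2]
      by (intro bump_eq_0) (simp add: power2_norm_eq_inner)
  qed
  finally show ?thesis .
qed

lemma
  fixes u :: "'a::euclidean_space \<Rightarrow> real"
  assumes cont: "continuous_on (cbox a b) u" and "0 < r" and sub: "cball x r \<subseteq> cbox a b"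
    and mvp: "\<And>s. 0 < s \<Longrightarrow> s \<le> r \<Longrightarrow> integral (ball x s) u = u x * measure lebesgue (ball x s)"
  shows bump_smoothing_mean_value: "bump.smoothing r u a b x = u x * bump.smoothing r (\<lambda>_. 1) a b x"
    and bump_laplacian_mean_value: "(\<Sum>i\<in>Basis. bump.smoothing_deriv2 r u a b x i i)
      = u x * (\<Sum>i\<in>Basis. bump.smoothing_deriv2 r (\<lambda>_. 1) a b x i i)"
proof -
  note radial = integral_cbox_radial_weight[OF cont sub _ _ mvp]
  have dist_sq: "(y - x) \<bullet> (y - x) = (dist x y)\<^sup>2" for y
    using dist_norm[of y x] by (simp add: dist_commute power2_norm_eq_inner)
  have outside: "r\<^sup>2 \<le> t\<^sup>2" if "r \<le> t" for t
    using that \<open>0 < r\<close> by (simp add: power_mono)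
  show "bump.smoothing r u a b x = u x * bump.smoothing r (\<lambda>_. 1) a b x"
    unfolding bump.smoothing_def dist_sq
    using radial[of "\<lambda>t. bump r (t\<^sup>2)"] outside bump_eq_0(1) by (simp add: continuous_intros)
  define P where "P t = 4 * bump'' r (t\<^sup>2) * t\<^sup>2 + 2 * real DIM('a) * bump' r (t\<^sup>2)" for t
  show "(\<Sum>i\<in>Basis. bump.smoothing_deriv2 r u a b x i i)
      = u x * (\<Sum>i\<in>Basis. bump.smoothing_deriv2 r (\<lambda>_. 1) a b x i i)"
    using radial[of P] outside bump_eq_0(2,3)
    by (simp add: bump.sum_smoothing_deriv2_Basis cont dist_sq P_def continuous_intros)
qed

section \<open>The mean value property implies harmonicity\<close>

definition mean_value_property :: "'a::euclidean_space set \<Rightarrow> ('a \<Rightarrow> real) \<Rightarrow> bool" where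
  "mean_value_property D u \<longleftrightarrow>
     (\<forall>x\<in>D. \<forall>r>0. cball x r \<subseteq> D \<longrightarrow> integral (ball x r) u = u x * measure lebesgue (ball x r))"

lemma open_contains_cbox_neighbourhood:
  fixes x0 :: "'a::euclidean_space"
  assumes "open D" "x0 \<in> D"
  obtains a b r where "0 < r" "cbox a b \<subseteq> D" "\<And>x. x \<in> ball x0 r \<Longrightarrow> cball x r \<subseteq> cbox a b"
proof -
  obtain a b where box: "cbox a b \<subseteq> D" "x0 \<in> box a b"
    using open_contains_cbox[OF assms] by metis
  obtain e where "e > 0" "ball x0 e \<subseteq> box a b"
    using open_contains_ball[of "box a b"] box(2) open_box by blast
  have "cball x (e/2) \<subseteq> cbox a b" if "x \<in> ball x0 (e/2)" for x
  proof
    fix y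
    assume "y \<in> cball x (e/2)"
    then have "y \<in> ball x0 e"
      using that dist_triangle[of x0 y x] by auto
    then show "y \<in> cbox a b"
      using \<open>ball x0 e \<subseteq> box a b\<close> box_subset_cbox by blast
  qed
  then show ?thesis
    using that[of "e/2" a b] \<open>e > 0\<close> box(1) by simp
qed

lemma locally_harmonic_if_mean_value_property:
  fixes u :: "'a::euclidean_space \<Rightarrow> real"
  assumes "open D" and cont: "continuous_on D u" and mvp: "mean_value_property D u" and "x0 \<in> D"
  shows "\<exists>U. open U \<and> x0 \<in> U \<and> harmonic_on U u"
proof -
  obtain a b r where "0 < r" and box: "cbox a b \<subseteq> D"
    and cball: "\<And>x. x \<in> ball x0 r \<Longrightarrow> cball x r \<subseteq> cbox a b"
    using open_contains_cbox_neighbourhood[OF \<open>open D\<close> \<open>x0 \<in> D\<close>] by metis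
  define U where "U = ball x0 r"
  have cont_box: "continuous_on (cbox a b) u"
    using continuous_on_subset[OF cont box] .
  have mvp_U: "integral (ball x s) u = u x * measure lebesgue (ball x s)"
    if "x \<in> U" "0 < s" "s \<le> r" for x s
  proof -
    have "cball x s \<subseteq> D"
      using cball[of x] box subset_cball[OF that(3)] that(1) by (auto simp: U_def)
    moreover have "x \<in> cball x s"
      using \<open>0 < s\<close> by simp
    ultimately show ?thesis
      using mvp \<open>0 < s\<close> unfolding mean_value_property_def by blast
  qed
  define C where "C = integral (ball (0::'a) r) (\<lambda>z. bump r (z \<bullet> z))"
  have "C > 0"
    unfolding C_def using \<open>0 < r\<close> by (rule integral_bump_pos)
  have const: "bump.smoothing r (\<lambda>_. 1) a b x = C" if "x \<in> U" for x
    unfolding C_def using \<open>0 < r\<close> cball[of x] that by (intro bump_smoothing_const) (auto simp: U_def)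
  have u: "u x = 1 / C * bump.smoothing r u a b x" if "x \<in> U" for x
    using bump_smoothing_mean_value[OF cont_box \<open>0 < r\<close> _ mvp_U[OF that]] cball[of x] that
      const[OF that] \<open>C > 0\<close> by (simp add: U_def)
  have "(\<Sum>i\<in>Basis. bump.smoothing_deriv2 r u a b x i i) = 0" if "x \<in> U" for x
    using bump_laplacian_mean_value[OF cont_box \<open>0 < r\<close> _ mvp_U[OF that]] cball[of x] that
      bump.smoothing_deriv2_eq_0_if_constant[of a b "\<lambda>_. 1" U] const
    by (simp add: U_def)
  then have "harmonic_on U (\<lambda>x. 1 / C * bump.smoothing r u a b x)"
    by (rule bump.harmonic_on_smoothing[OF cont_box])
  then have "harmonic_on U u"
    by (rule harmonic_on_cong[rotated 2]) (simp_all add: U_def u)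
  then show ?thesis
    using \<open>0 < r\<close> by (intro exI[of _ U]) (simp add: U_def)
qed

lemma harmonic_on_if_mean_value_property:
  fixes u :: "'a::euclidean_space \<Rightarrow> real"
  assumes "open D" "continuous_on D u" "mean_value_property D u"
  shows "harmonic_on D u"
  using locally_harmonic_if_mean_value_property[OF assms] by (rule harmonic_on_if_locally_harmonic)

theorem theorem1p3:
  fixes D :: "'a::euclidean_space set" and u :: "'a \<Rightarrow> real"
  assumes "DIM('a) \<ge> 2"
    and "open D" and "connected D" and "bounded D"
    and "continuous_on D u"
    and "(\<forall>x\<in>D. \<forall>r1 r2. 0 < r1 \<and> r1 < r2 \<and> cball x r2 \<subseteq> D \<longrightarrow>
            (\<forall>r. r1 < r \<and> r < r2 \<longrightarrow>
               integral (annulus x r1 r2) u / measure lebesgue (annulus x r1 r2)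
                 = sphere_integral u x r / (omega DIM('a) * r ^ (DIM('a) - 1))))
       \<or> (\<forall>x\<in>D. \<forall>r1 r2. 0 < r1 \<and> r1 < r2 \<and> cball x r2 \<subseteq> D \<longrightarrow>
               integral (annulus x r1 r2) u / measure lebesgue (annulus x r1 r2)
                 = sphere_integral u x r1 / (omega DIM('a) * r1 ^ (DIM('a) - 1)))
       \<or> (\<forall>x\<in>D. \<forall>r1 r2. 0 < r1 \<and> r1 < r2 \<and> cball x r2 \<subseteq> D \<longrightarrow>
               integral (annulus x r1 r2) u / measure lebesgue (annulus x r1 r2)
                 = sphere_integral u x r2 / (omega DIM('a) * r2 ^ (DIM('a) - 1)))"
  shows "harmonic_on D u"
proof -
  have "mean_value_property D u"
    unfolding mean_value_property_def
  proof (intro ballI allI impI)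
    fix x r
    assume x: "x \<in> D" and "0 < r" and ball: "cball x r \<subseteq> D"
    then have sub: "\<And>b. b \<le> r \<Longrightarrow> cball x b \<subseteq> D"
      by (meson dual_order.trans subset_cball)
    show "integral (ball x r) u = u x * measure lebesgue (ball x r)"
      by (rule integral_ball_eq_center_value_if_annulus_means[OF
            continuous_on_subset[OF assms(5) ball] \<open>0 < r\<close>,
            where g = "\<lambda>\<rho>. sphere_integral u x \<rho> / (omega DIM('a) * \<rho> ^ (DIM('a) - 1))"])
        (unfold annulus_mean_def, insert assms(6) x sub, elim disjE; blast)
  qed
  then show ?thesis
    by (rule harmonic_on_if_mean_value_property[OF assms(2,5)])
qed

end
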